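(* Consider uplink two-user NOMA with users $U_1,U_2$ at fixed distances $0<d_1<d_2$ from the base station (BS). Let $X_k=|h_k|^2d_k^{-\alpha}$ be the channel gains, with $\alpha>0$ and $h_1,h_2$ i.i.d. $\mathcal{CN}(0,1)$, independent of the BS's distance estimates $\hat d_1,\hat d_2$ (defined in the context), and let $P_e^1=\Pr\{\hat d_1>\hat d_2\}$. The user $N$ with the smaller estimated distance transmits with SNR $\rho_1>0$ and the other user $F$ with SNR $\rho_2>0$; the BS first decodes $N$'s signal treating $F$'s as noise, then decodes $F$'s signal after cancellation. Let $\epsilon_0=2^{R_0^*}-1>0$ for a target rate $R_0^*>0$ and define the common outage probability $$P_{cop}=1-\Pr\left\{\frac{\rho_1X_N}{\rho_2X_F+1}>\epsilon_0,\ \rho_2X_F>\epsilon_0\right\},$$ where $X_N,X_F$ are the channel gains of $N$ and $F$. Then $$P_{cop}=1-(1-P_e^1)\frac{\lambda_2}{\lambda_2+k\lambda_1}e^{-\lambda_1C-(\lambda_2+k\lambda_1)B}-P_e^1\frac{\lambda_1}{\lambda_1+k\lambda_2}e^{-\lambda_2C-(\lambda_1+k\lambda_2)B},$$ where $B=\frac{\epsilon_0}{\rho_2}$, $C=\frac{\epsilon_0}{\rho_1}$, $k=\frac{\epsilon_0\rho_2}{\rho_1}$ and $\lambda_k=d_k^\alpha$.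
   Context: Position model: user $U_k$ is at fixed position $(x_k,y_k)$ with $d_k=\sqrt{x_k^2+y_k^2}$; the BS's estimates are $\hat x_k\sim\mathcal N(x_k,\sigma_{ob}^2)$, $\hat y_k\sim\mathcal N(y_k,\sigma_{ob}^2)$, all mutually independent, and $\hat d_k=\sqrt{\hat x_k^2+\hat y_k^2}$. Transmit SNRs are assigned by estimated order: the estimated-nearer user uses $\rho_1$ and the estimated-farther user uses $\rho_2$. *)

theory Defs
  imports "HOL-Probability.Probability"
begin

definition dhat :: "(nat \<Rightarrow> 'a \<Rightarrow> real) \<Rightarrow> (nat \<Rightarrow> 'a \<Rightarrow> real) \<Rightarrow> nat \<Rightarrow> 'a \<Rightarrow> real" where
  "dhat xe ye k \<omega> = sqrt ((xe k \<omega>)\<^sup>2 + (ye k \<omega>)\<^sup>2)"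

definition gain :: "(nat \<Rightarrow> 'a \<Rightarrow> real) \<Rightarrow> (nat \<Rightarrow> 'a \<Rightarrow> real) \<Rightarrow> (nat \<Rightarrow> real) \<Rightarrow> real \<Rightarrow> nat \<Rightarrow> 'a \<Rightarrow> real" where
  "gain hr hi d \<alpha> k \<omega> = ((hr k \<omega>)\<^sup>2 + (hi k \<omega>)\<^sup>2) * d k powr (-\<alpha>)"

text \<open>Index of the estimated-nearer user N and the estimated-farther user F
  (ties, a null event, are resolved in favour of U1 being N).\<close>
definition nearU :: "(nat \<Rightarrow> 'a \<Rightarrow> real) \<Rightarrow> (nat \<Rightarrow> 'a \<Rightarrow> real) \<Rightarrow> 'a \<Rightarrow> nat" where
  "nearU xe ye \<omega> = (if dhat xe ye 1 \<omega> \<le> dhat xe ye 2 \<omega> then 1 else 2)"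

definition farU :: "(nat \<Rightarrow> 'a \<Rightarrow> real) \<Rightarrow> (nat \<Rightarrow> 'a \<Rightarrow> real) \<Rightarrow> 'a \<Rightarrow> nat" where
  "farU xe ye \<omega> = (if dhat xe ye 1 \<omega> \<le> dhat xe ye 2 \<omega> then 2 else 1)"

text \<open>The eight underlying real random variables, indexed by (component, user):
  component 0 = Re h_k, 1 = Im h_k, 2 = xhat_k, 3 = yhat_k.\<close>
definition rvs :: "(nat \<Rightarrow> 'a \<Rightarrow> real) \<Rightarrow> (nat \<Rightarrow> 'a \<Rightarrow> real) \<Rightarrow> (nat \<Rightarrow> 'a \<Rightarrow> real) \<Rightarrow> (nat \<Rightarrow> 'a \<Rightarrow> real) \<Rightarrow> nat \<times> nat \<Rightarrow> 'a \<Rightarrow> real" where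
  "rvs hr hi xe ye = (\<lambda>(c, k). if c = 0 then hr k else if c = 1 then hi k else if c = 2 then xe k else ye k)"

end

theory Submission
  imports Defs "HOL-Real_Asymp.Real_Asymp"
begin

(* The squared modulus of a CN(0,1) coefficient is Exp(1): in the quarter plane the Gaussian
  density over the disc u^2 + v^2 <= a is integrated by the substitution v = u s, after which
  the u-integral is elementary and the s-integral is an arctangent. Hence each gain X_k is
  exponential with rate lambda_k. For independent exponential gains the success event is the
  wedge X_F > B, X_N > C + k X_F, and the memorylessness of X_N turns its probability into a
  single exponential integral. Finally the estimated order depends only on the position
  estimates, which are independent of the fading, so the success probability splits into the
  two orderings weighted by 1 - P_e^1 and P_e^1. *)

lemma nn_integral_lborel_even:
  fixes f :: "real \<Rightarrow> ennreal"
  assumes [measurable]: "f \<in> borel_measurable borel" and even: "\<And>x. f (-x) = f x"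
  shows "(\<integral>\<^sup>+x. f x \<partial>lborel) = 2 * (\<integral>\<^sup>+x. f x * indicator {0<..} x \<partial>lborel)"
proof -
  have "(\<integral>\<^sup>+x. f x \<partial>lborel) = (\<integral>\<^sup>+x. f x * indicator {0<..} x + f x * indicator {..<0} x \<partial>lborel)"
    by (intro nn_integral_cong_AE eventually_mono[OF AE_lborel_singleton[of 0]])
       (auto split: split_indicator)
  also have "\<dots> = (\<integral>\<^sup>+x. f x * indicator {0<..} x \<partial>lborel) + (\<integral>\<^sup>+x. f x * indicator {..<0} x \<partial>lborel)"
    by (rule nn_integral_add) auto
  also have "(\<integral>\<^sup>+x. f x * indicator {..<0} x \<partial>lborel)
      = (\<integral>\<^sup>+x. f (0 + (-1) * x) * indicator {..<0} (0 + (-1) * x) \<partial>lborel)"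
    by (subst nn_integral_real_affine[where c="-1" and t=0]) auto
  also have "\<dots> = (\<integral>\<^sup>+x. f x * indicator {0<..} x \<partial>lborel)"
    by (intro nn_integral_cong) (auto simp: even split: split_indicator)
  finally show ?thesis
    by (metis mult_2)
qed

lemma nn_integral_gaussian_ray:
  fixes c a :: real
  assumes c: "0 < c" and a: "0 \<le> a"
  shows "(\<integral>\<^sup>+u. ennreal (u * exp (- (u\<^sup>2 * c)) / pi * indicator {..a} (u\<^sup>2 * c)) * indicator {0<..} u \<partial>lborel)
     = ennreal ((1 - exp (-a)) / (2 * pi * c))"
proof -
  define r where "r = sqrt (a / c)"
  have r: "0 \<le> r" "a = r\<^sup>2 * c" using a c by (auto simp: r_def)
  have cutoff: "u\<^sup>2 * c \<le> a \<longleftrightarrow> u \<le> r" if "0 < u" for u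
  proof -
    have "u\<^sup>2 * c \<le> a \<longleftrightarrow> u\<^sup>2 \<le> r\<^sup>2" using c r by simp
    also have "\<dots> \<longleftrightarrow> u \<le> r" using that r by (meson less_imp_le power_mono power2_le_imp_le)
    finally show ?thesis .
  qed
  have "(\<integral>\<^sup>+u. ennreal (u * exp (- (u\<^sup>2 * c)) / pi * indicator {..a} (u\<^sup>2 * c)) * indicator {0<..} u \<partial>lborel)
     = (\<integral>\<^sup>+u. ennreal (u * exp (- (u\<^sup>2 * c)) / pi) * indicator {0..r} u \<partial>lborel)"
    using cutoff by (intro nn_integral_cong) (auto split: split_indicator)
  also have "\<dots> = ennreal (- exp (- (r\<^sup>2 * c)) / (2 * c * pi) - (- exp (- (0\<^sup>2 * c)) / (2 * c * pi)))"
    by (rule nn_integral_FTC_Icc[where F="\<lambda>u. - exp (- (u\<^sup>2 * c)) / (2 * c * pi)"])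
       (use c r in \<open>auto intro!: derivative_eq_intros simp: field_simps\<close>)
  also have "- exp (- (r\<^sup>2 * c)) / (2 * c * pi) - (- exp (- (0\<^sup>2 * c)) / (2 * c * pi)) = (1 - exp (-a)) / (2 * pi * c)"
    using c r by (simp add: field_simps)
  finally show ?thesis .
qed

lemma nn_integral_inverse_one_plus_square:
  fixes K :: real assumes K: "0 \<le> K"
  shows "(\<integral>\<^sup>+s. ennreal (K / (1 + s\<^sup>2)) * indicator {0<..} s \<partial>lborel) = ennreal (K * pi / 2)"
proof -
  have "(\<integral>\<^sup>+s. ennreal (K / (1 + s\<^sup>2)) * indicator {0<..} s \<partial>lborel)
      = (\<integral>\<^sup>+s. ennreal (K / (1 + s\<^sup>2)) * indicator {0..} s \<partial>lborel)"
    by (intro nn_integral_cong_AE eventually_mono[OF AE_lborel_singleton[of 0]])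
       (auto split: split_indicator)
  also have "\<dots> = ennreal (K * (pi / 2) - K * arctan 0)"
  proof (rule nn_integral_FTC_atLeast[where F="\<lambda>s. K * arctan s"])
    show "((\<lambda>s. K * arctan s) \<longlongrightarrow> K * (pi / 2)) at_top"
      by (intro tendsto_intros) (simp_all add: tendsto_arctan_at_top)
  qed (use K in \<open>auto intro!: derivative_eq_intros simp: add_nonneg_eq_0_iff field_simps power2_eq_square\<close>)
  finally show ?thesis by simp
qed

lemma nn_integral_gaussian_disc_quadrant:
  fixes a :: real assumes a: "0 \<le> a"
  shows "(\<integral>\<^sup>+u. (\<integral>\<^sup>+v. ennreal (exp (-(u\<^sup>2+v\<^sup>2)) / pi * indicator {..a} (u\<^sup>2+v\<^sup>2)) * indicator {0<..} v \<partial>lborel)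
            * indicator {0<..} u \<partial>lborel)
    = ennreal ((1 - exp (-a)) / 4)"
proof -
  define g where "g u v = ennreal (exp (-(u\<^sup>2+v\<^sup>2)) / pi * indicator {..a} (u\<^sup>2+v\<^sup>2)) * indicator {0<..} v"
    for u v :: real
  define F where "F u s = ennreal (u * exp (- (u\<^sup>2 * (1 + s\<^sup>2))) / pi * indicator {..a} (u\<^sup>2 * (1 + s\<^sup>2)))
    * indicator {0<..} s * indicator {0<..} u" for u s :: real
  have [measurable]: "g u \<in> borel_measurable borel" for u unfolding g_def by measurable
  have [measurable]: "case_prod F \<in> borel_measurable (lborel \<Otimes>\<^sub>M lborel)" unfolding F_def by measurable
  have substitution: "(\<integral>\<^sup>+v. g u v \<partial>lborel) * indicator {0<..} u = (\<integral>\<^sup>+s. F u s \<partial>lborel)" for u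
  proof (cases "0 < u")
    case u: True
    have "(\<integral>\<^sup>+v. g u v \<partial>lborel) = (\<integral>\<^sup>+s. ennreal \<bar>u\<bar> * g u (0 + u * s) \<partial>lborel)"
      using u by (subst nn_integral_real_affine[where c=u and t=0]) (auto simp: g_def nn_integral_cmult)
    also have "\<dots> = (\<integral>\<^sup>+s. F u s \<partial>lborel)"
    proof (intro nn_integral_cong)
      fix s :: real
      have "u\<^sup>2 + (u * s)\<^sup>2 = u\<^sup>2 * (1 + s\<^sup>2)" by (simp add: algebra_simps power_mult_distrib)
      moreover have "0 < u * s \<longleftrightarrow> 0 < s" using u by (simp add: zero_less_mult_iff)
      ultimately show "ennreal \<bar>u\<bar> * g u (0 + u * s) = F u s"
        using u by (auto simp: g_def F_def ennreal_mult[symmetric] split: split_indicator)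
    qed
    finally show ?thesis using u by simp
  qed (simp add: F_def)
  have "(\<integral>\<^sup>+u. (\<integral>\<^sup>+v. g u v \<partial>lborel) * indicator {0<..} u \<partial>lborel) = (\<integral>\<^sup>+u. \<integral>\<^sup>+s. F u s \<partial>lborel \<partial>lborel)"
    by (simp add: substitution)
  also have "\<dots> = (\<integral>\<^sup>+s. \<integral>\<^sup>+u. F u s \<partial>lborel \<partial>lborel)"
    by (rule lborel_pair.Fubini'[symmetric]) measurable
  also have "\<dots> = (\<integral>\<^sup>+s. ennreal ((1 - exp (-a)) / (2 * pi) / (1 + s\<^sup>2)) * indicator {0<..} s \<partial>lborel)"
  proof (intro nn_integral_cong)
    fix s :: real
    have "(\<integral>\<^sup>+u. F u s \<partial>lborel) =
      (\<integral>\<^sup>+u. ennreal (u * exp (- (u\<^sup>2 * (1 + s\<^sup>2))) / pi * indicator {..a} (u\<^sup>2 * (1 + s\<^sup>2)))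
         * indicator {0<..} u \<partial>lborel) * indicator {0<..} s"
      unfolding F_def by (subst nn_integral_multc[symmetric]) (auto intro!: nn_integral_cong simp: mult_ac)
    also have "\<dots> = ennreal ((1 - exp (-a)) / (2 * pi) / (1 + s\<^sup>2)) * indicator {0<..} s"
      using nn_integral_gaussian_ray[of "1 + s\<^sup>2" a] a by (simp add: add_pos_nonneg field_simps)
    finally show "(\<integral>\<^sup>+u. F u s \<partial>lborel) = ennreal ((1 - exp (-a)) / (2 * pi) / (1 + s\<^sup>2)) * indicator {0<..} s" .
  qed
  also have "\<dots> = ennreal ((1 - exp (-a)) / (2 * pi) * pi / 2)"
    by (rule nn_integral_inverse_one_plus_square) (use a in auto)
  finally show ?thesis by (simp add: g_def)
qed

lemma nn_integral_gaussian_disc: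
  fixes a :: real assumes a: "0 \<le> a"
  shows "(\<integral>\<^sup>+u. \<integral>\<^sup>+v. ennreal (exp (-(u\<^sup>2+v\<^sup>2)) / pi * indicator {..a} (u\<^sup>2+v\<^sup>2)) \<partial>lborel \<partial>lborel)
    = ennreal (1 - exp (-a))"
proof -
  define g where "g u v = ennreal (exp (-(u\<^sup>2+v\<^sup>2)) / pi * indicator {..a} (u\<^sup>2+v\<^sup>2))" for u v :: real
  define Q where "Q u = (\<integral>\<^sup>+v. g u v * indicator {0<..} v \<partial>lborel)" for u
  have [measurable]: "g u \<in> borel_measurable borel" "Q \<in> borel_measurable borel" for u
    unfolding Q_def g_def by measurable
  have "(\<integral>\<^sup>+u. \<integral>\<^sup>+v. g u v \<partial>lborel \<partial>lborel) = (\<integral>\<^sup>+u. 2 * Q u \<partial>lborel)"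
    unfolding Q_def by (subst nn_integral_lborel_even) (auto simp: g_def)
  also have "\<dots> = 2 * (2 * (\<integral>\<^sup>+u. Q u * indicator {0<..} u \<partial>lborel))"
    by (subst nn_integral_cmult, measurable, subst nn_integral_lborel_even) (auto simp: Q_def g_def)
  also have "\<dots> = 4 * ennreal ((1 - exp (-a)) / 4)"
    using nn_integral_gaussian_disc_quadrant[OF a] by (simp add: Q_def g_def mult.assoc[symmetric])
  also have "\<dots> = ennreal (1 - exp (-a))"
    by (subst ennreal_numeral[symmetric], subst ennreal_mult[symmetric]) (use a in auto)
  finally show ?thesis unfolding g_def .
qed

lemma (in prob_space) exponential_distributed_sum_sq_normal:
  assumes ind: "indep_var lborel U lborel V"
    and dU: "distributed M lborel U (normal_density 0 (sqrt (1/2)))"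
    and dV: "distributed M lborel V (normal_density 0 (sqrt (1/2)))"
  shows "distributed M lborel (\<lambda>\<omega>. (U \<omega>)\<^sup>2 + (V \<omega>)\<^sup>2) (exponential_density 1)"
proof -
  define \<phi> where "\<phi> = normal_density 0 (sqrt (1/2))"
  have [measurable]: "U \<in> borel_measurable M" "V \<in> borel_measurable M"
    using distributed_measurable[OF dU] distributed_measurable[OF dV] by auto
  have joint: "distributed M (lborel \<Otimes>\<^sub>M lborel) (\<lambda>\<omega>. (U \<omega>, V \<omega>)) (\<lambda>(u, v). ennreal (\<phi> u) * ennreal (\<phi> v))"
    unfolding \<phi>_def
    by (rule distributed_joint_indep[OF _ _ dU dV ind]) (auto intro: lborel.sigma_finite_measure_axioms)
  have \<phi>_prod: "\<phi> u * \<phi> v = exp (-(u\<^sup>2+v\<^sup>2)) / pi" for u v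
    by (simp add: \<phi>_def normal_density_def exp_add[symmetric] field_simps)
  have \<phi>_nonneg: "0 \<le> \<phi> u" for u
    by (simp add: \<phi>_def normal_density_nonneg)
  show ?thesis
  proof (rule exponential_distributedI)
    fix a :: real assume a: "0 \<le> a"
    define A where "A = {p :: real \<times> real. (fst p)\<^sup>2 + (snd p)\<^sup>2 \<le> a}"
    have "A = {p \<in> space (lborel \<Otimes>\<^sub>M lborel). (fst p)\<^sup>2 + (snd p)\<^sup>2 \<le> a}"
      by (simp add: A_def space_pair_measure)
    also have "\<dots> \<in> sets (lborel \<Otimes>\<^sub>M lborel)" by measurable
    finally have [measurable]: "A \<in> sets (lborel \<Otimes>\<^sub>M lborel)" .
    have "emeasure M {\<omega> \<in> space M. (U \<omega>)\<^sup>2 + (V \<omega>)\<^sup>2 \<le> a} = emeasure M ((\<lambda>\<omega>. (U \<omega>, V \<omega>)) -` A \<inter> space M)"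
      by (intro arg_cong[where f="emeasure M"]) (auto simp: A_def)
    also have "\<dots> = (\<integral>\<^sup>+p. (\<lambda>(u, v). ennreal (\<phi> u) * ennreal (\<phi> v)) p * indicator A p \<partial>(lborel \<Otimes>\<^sub>M lborel))"
      by (rule distributed_emeasure[OF joint]) measurable
    also have "\<dots> = (\<integral>\<^sup>+u. \<integral>\<^sup>+v. ennreal (\<phi> u) * ennreal (\<phi> v) * indicator A (u, v) \<partial>lborel \<partial>lborel)"
      by (subst lborel.nn_integral_fst[symmetric]) (auto simp: \<phi>_def)
    also have "\<dots> = (\<integral>\<^sup>+u. \<integral>\<^sup>+v. ennreal (exp (-(u\<^sup>2+v\<^sup>2)) / pi * indicator {..a} (u\<^sup>2+v\<^sup>2)) \<partial>lborel \<partial>lborel)"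
      by (intro nn_integral_cong)
         (auto simp: \<phi>_prod \<phi>_nonneg A_def ennreal_mult[symmetric] split: split_indicator)
    also have "\<dots> = ennreal (1 - exp (-a))"
      by (rule nn_integral_gaussian_disc[OF a])
    finally show "emeasure M {\<omega> \<in> space M. (U \<omega>)\<^sup>2 + (V \<omega>)\<^sup>2 \<le> a} = 1 - ennreal (exp (- a * 1))"
      by (simp add: ennreal_minus ennreal_1[symmetric] del: ennreal_1)
  qed auto
qed

lemma nn_integral_exponential_density_tail:
  fixes l t :: real assumes l: "0 < l" and t: "0 \<le> t"
  shows "(\<integral>\<^sup>+x. ennreal (exponential_density l x) * indicator {t<..} x \<partial>lborel) = ennreal (exp (- t * l))"
proof -
  have "(\<integral>\<^sup>+x. ennreal (exponential_density l x) * indicator {t<..} x \<partial>lborel)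
      = (\<integral>\<^sup>+x. ennreal (l * exp (- x * l)) * indicator {t..} x \<partial>lborel)"
    by (intro nn_integral_cong_AE eventually_mono[OF AE_lborel_singleton[of t]])
       (use t in \<open>auto simp: exponential_density_def split: split_indicator\<close>)
  also have "\<dots> = ennreal (0 - (- exp (- t * l)))"
  proof (rule nn_integral_FTC_atLeast[where F="\<lambda>x. - exp (- x * l)"])
    have "((\<lambda>x. exp (- x * l)) \<longlongrightarrow> 0) at_top"
      by (rule filterlim_compose[OF exp_at_bot]) (use l in real_asymp)
    then show "((\<lambda>x. - exp (- x * l)) \<longlongrightarrow> 0) at_top"
      using tendsto_minus by fastforce
  qed (use l in \<open>auto intro!: derivative_eq_intros simp: field_simps\<close>)
  finally show ?thesis by simp
qed

lemma exponential_density_wedge_slice: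
  fixes la lb B C k y :: real
  assumes la: "0 < la" and lb: "0 < lb" and B: "0 \<le> B" and C: "0 \<le> C" and k: "0 \<le> k"
  shows "ennreal (exponential_density lb y) * indicator {B<..} y
           * (\<integral>\<^sup>+x. ennreal (exponential_density la x) * indicator {C + k * y<..} x \<partial>lborel)
    = ennreal (lb / (lb + k * la) * exp (- la * C)) * (ennreal (exponential_density (lb + k * la) y) * indicator {B<..} y)"
proof (cases "B < y")
  case True
  define \<mu> where "\<mu> = lb + k * la"
  have \<mu>: "0 < \<mu>" using la lb k by (simp add: \<mu>_def add_pos_nonneg)
  have y: "0 \<le> y" "0 \<le> C + k * y" using True B C k by auto
  have "lb * exp (- y * lb) * exp (- (C + k * y) * la) = lb / \<mu> * exp (- la * C) * (\<mu> * exp (- y * \<mu>))"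
    using \<mu> by (simp add: \<mu>_def exp_add[symmetric] field_simps)
  then show ?thesis
    using True y la lb \<mu> nn_integral_exponential_density_tail[OF la y(2)]
    by (simp add: \<mu>_def[symmetric] exponential_density_def ennreal_mult[symmetric])
qed simp

lemma (in prob_space) prob_exponential_wedge:
  assumes ind: "indep_var lborel Xb lborel Xa"
    and dA: "distributed M lborel Xa (exponential_density la)"
    and dB: "distributed M lborel Xb (exponential_density lb)"
    and la: "0 < la" and lb: "0 < lb" and B: "0 \<le> B" and C: "0 \<le> C" and k: "0 \<le> k"
  shows "prob {\<omega> \<in> space M. B < Xb \<omega> \<and> C + k * Xb \<omega> < Xa \<omega>}
    = lb / (lb + k * la) * exp (- la * C - (lb + k * la) * B)"
proof -
  define \<mu> where "\<mu> = lb + k * la"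
  have \<mu>: "0 < \<mu>" using la lb k by (simp add: \<mu>_def add_pos_nonneg)
  define f where "f = (\<lambda>(y, x). ennreal (exponential_density lb y) * ennreal (exponential_density la x))"
  have [measurable]: "Xa \<in> borel_measurable M" "Xb \<in> borel_measurable M"
    using distributed_measurable[OF dA] distributed_measurable[OF dB] by auto
  have joint: "distributed M (lborel \<Otimes>\<^sub>M lborel) (\<lambda>\<omega>. (Xb \<omega>, Xa \<omega>)) f"
    unfolding f_def
    by (rule distributed_joint_indep[OF _ _ dB dA ind]) (auto intro: lborel.sigma_finite_measure_axioms)
  define A where "A = {p :: real \<times> real. B < fst p \<and> C + k * fst p < snd p}"
  have "A = {p \<in> space (lborel \<Otimes>\<^sub>M lborel). B < fst p \<and> C + k * fst p < snd p}"
    by (simp add: A_def space_pair_measure)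
  also have "\<dots> \<in> sets (lborel \<Otimes>\<^sub>M lborel)" by measurable
  finally have [measurable]: "A \<in> sets (lborel \<Otimes>\<^sub>M lborel)" .
  have "emeasure M {\<omega> \<in> space M. B < Xb \<omega> \<and> C + k * Xb \<omega> < Xa \<omega>}
      = emeasure M ((\<lambda>\<omega>. (Xb \<omega>, Xa \<omega>)) -` A \<inter> space M)"
    by (intro arg_cong[where f="emeasure M"]) (auto simp: A_def)
  also have "\<dots> = (\<integral>\<^sup>+p. f p * indicator A p \<partial>(lborel \<Otimes>\<^sub>M lborel))"
    by (rule distributed_emeasure[OF joint]) measurable
  also have "\<dots> = (\<integral>\<^sup>+y. \<integral>\<^sup>+x. f (y, x) * indicator A (y, x) \<partial>lborel \<partial>lborel)"
    by (subst lborel.nn_integral_fst[symmetric]) (auto simp: f_def)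
  also have "\<dots> = (\<integral>\<^sup>+y. ennreal (lb / \<mu> * exp (- la * C)) * (ennreal (exponential_density \<mu> y) * indicator {B<..} y) \<partial>lborel)"
  proof (intro nn_integral_cong)
    fix y :: real
    have "(\<integral>\<^sup>+x. f (y, x) * indicator A (y, x) \<partial>lborel)
      = (\<integral>\<^sup>+x. (ennreal (exponential_density lb y) * indicator {B<..} y)
              * (ennreal (exponential_density la x) * indicator {C + k * y<..} x) \<partial>lborel)"
      by (intro nn_integral_cong) (auto simp: f_def A_def split: split_indicator)
    also have "\<dots> = ennreal (exponential_density lb y) * indicator {B<..} y
              * (\<integral>\<^sup>+x. ennreal (exponential_density la x) * indicator {C + k * y<..} x \<partial>lborel)"
      by (rule nn_integral_cmult) measurable
    finally show "(\<integral>\<^sup>+x. f (y, x) * indicator A (y, x) \<partial>lborel)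
      = ennreal (lb / \<mu> * exp (- la * C)) * (ennreal (exponential_density \<mu> y) * indicator {B<..} y)"
      unfolding \<mu>_def using exponential_density_wedge_slice[OF la lb B C k] by simp
  qed
  also have "\<dots> = ennreal (lb / \<mu> * exp (- la * C)) * (\<integral>\<^sup>+y. ennreal (exponential_density \<mu> y) * indicator {B<..} y \<partial>lborel)"
    by (rule nn_integral_cmult) measurable
  also have "\<dots> = ennreal (lb / \<mu> * exp (- la * C - \<mu> * B))"
    using nn_integral_exponential_density_tail[OF \<mu> B] la lb \<mu>
    by (simp add: ennreal_mult[symmetric] exp_diff exp_minus field_simps)
  finally show ?thesis
    using la lb \<mu> by (simp add: emeasure_eq_measure \<mu>_def)
qed

lemma decoding_success_iff_wedge:
  fixes e \<rho>1 \<rho>2 a b :: real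
  assumes e: "0 < e" and \<rho>1: "0 < \<rho>1" and \<rho>2: "0 < \<rho>2"
  shows "(e < \<rho>1 * a / (\<rho>2 * b + 1) \<and> e < \<rho>2 * b) \<longleftrightarrow> e / \<rho>2 < b \<and> e / \<rho>1 + e * \<rho>2 / \<rho>1 * b < a"
proof (cases "e < \<rho>2 * b")
  case True
  then have "0 < \<rho>2 * b + 1" using e by linarith
  then have "e < \<rho>1 * a / (\<rho>2 * b + 1) \<longleftrightarrow> e / \<rho>1 + e * \<rho>2 / \<rho>1 * b < a"
    using \<rho>1 by (simp add: field_simps)
  with True \<rho>2 show ?thesis by (simp add: field_simps)
qed (use \<rho>2 in \<open>simp add: field_simps\<close>)

lemma (in prob_space) prob_decoding_success_exponential:
  assumes "indep_var lborel Xb lborel Xa"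
    and "distributed M lborel Xa (exponential_density la)"
    and "distributed M lborel Xb (exponential_density lb)"
    and "0 < la" "0 < lb" and e: "0 < e" and \<rho>1: "0 < \<rho>1" and \<rho>2: "0 < \<rho>2"
  shows "prob {\<omega> \<in> space M. e < \<rho>1 * Xa \<omega> / (\<rho>2 * Xb \<omega> + 1) \<and> e < \<rho>2 * Xb \<omega>}
    = lb / (lb + e * \<rho>2 / \<rho>1 * la) * exp (- la * (e / \<rho>1) - (lb + e * \<rho>2 / \<rho>1 * la) * (e / \<rho>2))"
  using prob_exponential_wedge[OF assms(1-5), of "e / \<rho>2" "e / \<rho>1" "e * \<rho>2 / \<rho>1"] e \<rho>1 \<rho>2
  by (simp add: decoding_success_iff_wedge[OF e \<rho>1 \<rho>2])

lemma (in prob_space) prob_if_indep_var: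
  assumes ind: "indep_var N1 W N2 Z"
    and [measurable]: "Measurable.pred N1 R" "Measurable.pred N2 P" "Measurable.pred N2 Q"
  shows "prob {\<omega> \<in> space M. if R (W \<omega>) then P (Z \<omega>) else Q (Z \<omega>)}
    = prob {\<omega> \<in> space M. R (W \<omega>)} * prob {\<omega> \<in> space M. P (Z \<omega>)}
      + prob {\<omega> \<in> space M. \<not> R (W \<omega>)} * prob {\<omega> \<in> space M. Q (Z \<omega>)}"
proof -
  have [measurable]: "W \<in> measurable M N1" "Z \<in> measurable M N2"
    using ind by (auto simp: indep_var_eq)
  have prob_indep: "prob {\<omega> \<in> space M. R' (W \<omega>) \<and> P' (Z \<omega>)}
      = prob {\<omega> \<in> space M. R' (W \<omega>)} * prob {\<omega> \<in> space M. P' (Z \<omega>)}"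
    if [measurable]: "Measurable.pred N1 R'" "Measurable.pred N2 P'" for R' P'
  proof -
    have "{\<omega> \<in> space M. R' (W \<omega>) \<and> P' (Z \<omega>)}
        = (\<lambda>\<omega>. (W \<omega>, Z \<omega>)) -` ({w \<in> space N1. R' w} \<times> {z \<in> space N2. P' z}) \<inter> space M"
      "{\<omega> \<in> space M. R' (W \<omega>)} = W -` {w \<in> space N1. R' w} \<inter> space M"
      "{\<omega> \<in> space M. P' (Z \<omega>)} = Z -` {z \<in> space N2. P' z} \<inter> space M"
      using measurable_space[of W M N1] measurable_space[of Z M N2] by auto
    then show ?thesis
      using indep_varD[OF ind, of "{w \<in> space N1. R' w}" "{z \<in> space N2. P' z}"] by simp
  qed
  have "prob {\<omega> \<in> space M. if R (W \<omega>) then P (Z \<omega>) else Q (Z \<omega>)}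
      = prob {\<omega> \<in> space M. R (W \<omega>) \<and> P (Z \<omega>)} + prob {\<omega> \<in> space M. \<not> R (W \<omega>) \<and> Q (Z \<omega>)}"
    by (subst finite_measure_Union[symmetric]) (auto intro!: arg_cong[where f=prob])
  then show ?thesis
    by (simp add: prob_indep prob_indep[of "\<lambda>w. \<not> R w" Q])
qed

lemma (in prob_space) indep_var_restrict_compose:
  assumes ind: "indep_vars (\<lambda>_. borel) Y I" and AB: "A \<inter> B = {}" "A \<subseteq> I" "B \<subseteq> I"
    and f: "f \<in> measurable (PiM A (\<lambda>_. borel)) N1" and g: "g \<in> measurable (PiM B (\<lambda>_. borel)) N2"
    and F: "\<And>\<omega>. F \<omega> = f (restrict (\<lambda>i. Y i \<omega>) A)" and G: "\<And>\<omega>. G \<omega> = g (restrict (\<lambda>i. Y i \<omega>) B)"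
  shows "indep_var N1 F N2 G"
proof -
  have "F = f \<circ> (\<lambda>\<omega>. restrict (\<lambda>i. Y i \<omega>) A)" "G = g \<circ> (\<lambda>\<omega>. restrict (\<lambda>i. Y i \<omega>) B)"
    by (auto simp: fun_eq_iff F G)
  then show ?thesis using indep_var_compose[OF indep_var_restrict[OF ind AB] f g] by simp
qed

lemma (in prob_space) indep_var_fading_components:
  assumes "indep_vars (\<lambda>_. borel) (rvs hr hi xe ye) ({0..<4} \<times> {1, 2})" and "k \<in> {1, 2}"
  shows "indep_var lborel (hr k) lborel (hi k)"
  by (rule indep_var_restrict_compose[OF assms(1), of "{(0, k)}" "{(1, k)}" "\<lambda>h. h (0, k)" _ "\<lambda>h. h (1, k)"])
     (use assms(2) in \<open>auto simp: rvs_def\<close>)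

lemma (in prob_space) exponential_distributed_gain:
  assumes ind: "indep_vars (\<lambda>_. borel) (rvs hr hi xe ye) ({0..<4} \<times> {1, 2})" and k: "k \<in> {1, 2}"
    and "distributed M lborel (hr k) (normal_density 0 (sqrt (1/2)))"
    and "distributed M lborel (hi k) (normal_density 0 (sqrt (1/2)))"
    and d: "0 < d k"
  shows "distributed M lborel (gain hr hi d \<alpha> k) (exponential_density (d k powr \<alpha>))"
proof -
  have "distributed M lborel (\<lambda>\<omega>. d k powr (-\<alpha>) * ((hr k \<omega>)\<^sup>2 + (hi k \<omega>)\<^sup>2))
      (erlang_density 0 (1 / d k powr (-\<alpha>)))"
    using exponential_distributed_sum_sq_normal[OF indep_var_fading_components[OF ind k] assms(3,4)] d
    by (intro erlang_distributed_mult_const) auto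
  moreover have "1 / d k powr (-\<alpha>) = d k powr \<alpha>" using d by (simp add: powr_minus divide_inverse)
  ultimately show ?thesis by (simp add: gain_def[abs_def] mult.commute)
qed

lemma (in prob_space) indep_var_gains:
  assumes "indep_vars (\<lambda>_. borel) (rvs hr hi xe ye) ({0..<4} \<times> {1, 2})"
    and "j \<in> {1, 2}" "k \<in> {1, 2}" "j \<noteq> k"
  shows "indep_var lborel (gain hr hi d \<alpha> j) lborel (gain hr hi d \<alpha> k)"
  by (rule indep_var_restrict_compose[OF assms(1), of "{(0, j), (1, j)}" "{(0, k), (1, k)}"
        "\<lambda>h. ((h (0, j))\<^sup>2 + (h (1, j))\<^sup>2) * d j powr (-\<alpha>)" _
        "\<lambda>h. ((h (0, k))\<^sup>2 + (h (1, k))\<^sup>2) * d k powr (-\<alpha>)"])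
     (use assms(2-4) in \<open>auto simp: rvs_def gain_def\<close>)

lemma (in prob_space) indep_var_estimated_distances_gains:
  assumes "indep_vars (\<lambda>_. borel) (rvs hr hi xe ye) ({0..<4} \<times> {1, 2})"
  shows "indep_var (borel \<Otimes>\<^sub>M borel) (\<lambda>\<omega>. (dhat xe ye 1 \<omega>, dhat xe ye 2 \<omega>))
           (borel \<Otimes>\<^sub>M borel) (\<lambda>\<omega>. (gain hr hi d \<alpha> 1 \<omega>, gain hr hi d \<alpha> 2 \<omega>))"
  by (rule indep_var_restrict_compose[OF assms, of "{2, 3} \<times> {1, 2}" "{0, 1} \<times> {1, 2}"
        "\<lambda>h. (sqrt ((h (2, 1))\<^sup>2 + (h (3, 1))\<^sup>2), sqrt ((h (2, 2))\<^sup>2 + (h (3, 2))\<^sup>2))" _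
        "\<lambda>h. (((h (0, 1))\<^sup>2 + (h (1, 1))\<^sup>2) * d 1 powr (-\<alpha>), ((h (0, 2))\<^sup>2 + (h (1, 2))\<^sup>2) * d 2 powr (-\<alpha>))"])
     (auto simp: rvs_def gain_def dhat_def)

lemma (in prob_space) prob_estimated_order_split:
  assumes ind: "indep_vars (\<lambda>_. borel) (rvs hr hi xe ye) ({0..<4} \<times> {1, 2})"
    and S: "Measurable.pred (borel \<Otimes>\<^sub>M borel) (\<lambda>z. S (fst z) (snd z))"
  shows "prob {\<omega> \<in> space M. S (gain hr hi d \<alpha> (nearU xe ye \<omega>) \<omega>) (gain hr hi d \<alpha> (farU xe ye \<omega>) \<omega>)}
    = (1 - prob {\<omega> \<in> space M. dhat xe ye 1 \<omega> > dhat xe ye 2 \<omega>})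
        * prob {\<omega> \<in> space M. S (gain hr hi d \<alpha> 1 \<omega>) (gain hr hi d \<alpha> 2 \<omega>)}
      + prob {\<omega> \<in> space M. dhat xe ye 1 \<omega> > dhat xe ye 2 \<omega>}
        * prob {\<omega> \<in> space M. S (gain hr hi d \<alpha> 2 \<omega>) (gain hr hi d \<alpha> 1 \<omega>)}"
proof -
  note indep = indep_var_estimated_distances_gains[OF ind, of d \<alpha>]
  define near1 where "near1 \<omega> \<longleftrightarrow> dhat xe ye 1 \<omega> \<le> dhat xe ye 2 \<omega>" for \<omega>
  have order: "Measurable.pred (borel \<Otimes>\<^sub>M borel) (\<lambda>w :: real \<times> real. fst w \<le> snd w)"
    by measurable
  have S_swap: "Measurable.pred (borel \<Otimes>\<^sub>M borel) (\<lambda>z. S (snd z) (fst z))"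
    using measurable_compose[OF measurable_pair_swap' S] by (simp add: case_prod_unfold)
  have "(\<lambda>\<omega>. (dhat xe ye 1 \<omega>, dhat xe ye 2 \<omega>)) \<in> measurable M (borel \<Otimes>\<^sub>M borel)"
    using indep unfolding indep_var_eq by blast
  from measurable_compose[OF this order] have "Measurable.pred M near1"
    by (simp add: near1_def[abs_def])
  moreover have "space M - {\<omega> \<in> space M. \<not> near1 \<omega>} = {\<omega> \<in> space M. near1 \<omega>}"
    by blast
  ultimately have prob_near: "prob {\<omega> \<in> space M. near1 \<omega>} = 1 - prob {\<omega> \<in> space M. \<not> near1 \<omega>}"
    using prob_compl[of "{\<omega> \<in> space M. \<not> near1 \<omega>}"] by simp
  have prob_far: "prob {\<omega> \<in> space M. \<not> near1 \<omega>} = prob {\<omega> \<in> space M. dhat xe ye 1 \<omega> > dhat xe ye 2 \<omega>}"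
    unfolding near1_def not_le ..
  have "{\<omega> \<in> space M. S (gain hr hi d \<alpha> (nearU xe ye \<omega>) \<omega>) (gain hr hi d \<alpha> (farU xe ye \<omega>) \<omega>)}
      = {\<omega> \<in> space M. if near1 \<omega> then S (gain hr hi d \<alpha> 1 \<omega>) (gain hr hi d \<alpha> 2 \<omega>)
                                 else S (gain hr hi d \<alpha> 2 \<omega>) (gain hr hi d \<alpha> 1 \<omega>)}"
    by (auto simp: nearU_def farU_def near1_def)
  then have "prob {\<omega> \<in> space M. S (gain hr hi d \<alpha> (nearU xe ye \<omega>) \<omega>) (gain hr hi d \<alpha> (farU xe ye \<omega>) \<omega>)}
      = prob {\<omega> \<in> space M. near1 \<omega>} * prob {\<omega> \<in> space M. S (gain hr hi d \<alpha> 1 \<omega>) (gain hr hi d \<alpha> 2 \<omega>)}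
      + prob {\<omega> \<in> space M. \<not> near1 \<omega>} * prob {\<omega> \<in> space M. S (gain hr hi d \<alpha> 2 \<omega>) (gain hr hi d \<alpha> 1 \<omega>)}"
    using prob_if_indep_var[OF indep order S S_swap] by (simp only: near1_def fst_conv snd_conv)
  then show ?thesis
    unfolding prob_near prob_far .
qed

theorem proposition4:
  fixes M :: "'a measure"
    and hr hi xe ye :: "nat \<Rightarrow> 'a \<Rightarrow> real"
    and x y :: "nat \<Rightarrow> real"
    and \<sigma> \<alpha> \<rho>1 \<rho>2 R0 :: real
  defines "d \<equiv> (\<lambda>k. sqrt ((x k)\<^sup>2 + (y k)\<^sup>2))"
  defines "lam \<equiv> (\<lambda>k. d k powr \<alpha>)"
  defines "\<epsilon>0 \<equiv> 2 powr R0 - 1"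
  defines "B \<equiv> \<epsilon>0 / \<rho>2" and "C \<equiv> \<epsilon>0 / \<rho>1" and "kk \<equiv> \<epsilon>0 * \<rho>2 / \<rho>1"
  defines "Pe1 \<equiv> measure M {\<omega> \<in> space M. dhat xe ye 1 \<omega> > dhat xe ye 2 \<omega>}"
  defines "XN \<equiv> (\<lambda>\<omega>. gain hr hi d \<alpha> (nearU xe ye \<omega>) \<omega>)"
  defines "XF \<equiv> (\<lambda>\<omega>. gain hr hi d \<alpha> (farU xe ye \<omega>) \<omega>)"
  defines "Pcop \<equiv> 1 - measure M {\<omega> \<in> space M.
              \<rho>1 * XN \<omega> / (\<rho>2 * XF \<omega> + 1) > \<epsilon>0 \<and> \<rho>2 * XF \<omega> > \<epsilon>0}"
  assumes "prob_space M"
    and "prob_space.indep_vars M (\<lambda>_. borel) (rvs hr hi xe ye) ({0..<4} \<times> {1, 2})"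
    and "\<And>k. k \<in> {1, 2} \<Longrightarrow> distributed M lborel (hr k) (normal_density 0 (sqrt (1/2)))"
    and "\<And>k. k \<in> {1, 2} \<Longrightarrow> distributed M lborel (hi k) (normal_density 0 (sqrt (1/2)))"
    and "\<And>k. k \<in> {1, 2} \<Longrightarrow> distributed M lborel (xe k) (normal_density (x k) \<sigma>)"
    and "\<And>k. k \<in> {1, 2} \<Longrightarrow> distributed M lborel (ye k) (normal_density (y k) \<sigma>)"
    and "\<sigma> > 0"
    and "0 < d 1" and "d 1 < d 2"
    and "\<alpha> > 0" and "\<rho>1 > 0" and "\<rho>2 > 0" and "R0 > 0"
  shows "Pcop = 1 - (1 - Pe1) * (lam 2 / (lam 2 + kk * lam 1)) * exp (- lam 1 * C - (lam 2 + kk * lam 1) * B)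
                  - Pe1 * (lam 1 / (lam 1 + kk * lam 2)) * exp (- lam 2 * C - (lam 1 + kk * lam 2) * B)"
proof -
  interpret prob_space M by fact
  note ind = \<open>indep_vars (\<lambda>_. borel) (rvs hr hi xe ye) ({0..<4} \<times> {1, 2})\<close>
  have \<epsilon>0: "0 < \<epsilon>0" using \<open>R0 > 0\<close> by (simp add: \<epsilon>0_def)
  have d: "0 < d k" and lam: "0 < lam k" if "k \<in> {1, 2}" for k
    using that \<open>0 < d 1\<close> \<open>d 1 < d 2\<close> by (auto simp: lam_def)
  have gain_exponential: "distributed M lborel (gain hr hi d \<alpha> k) (exponential_density (lam k))"
    if "k \<in> {1, 2}" for k
    unfolding lam_def by (rule exponential_distributed_gain[where d=d, OF ind that assms(13,14)[OF that] d[OF that]])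
  define success where "success a b \<longleftrightarrow> \<epsilon>0 < \<rho>1 * a / (\<rho>2 * b + 1) \<and> \<epsilon>0 < \<rho>2 * b" for a b
  have success_pred: "Measurable.pred (borel \<Otimes>\<^sub>M borel) (\<lambda>z. success (fst z) (snd z))"
    unfolding success_def by measurable
  have success_prob: "prob {\<omega> \<in> space M. success (gain hr hi d \<alpha> j \<omega>) (gain hr hi d \<alpha> k \<omega>)}
      = lam k / (lam k + kk * lam j) * exp (- lam j * C - (lam k + kk * lam j) * B)"
    if "j \<in> {1, 2}" "k \<in> {1, 2}" "j \<noteq> k" for j k
    using prob_decoding_success_exponential[OF indep_var_gains[OF ind that(2,1) that(3)[symmetric]]
        gain_exponential[OF that(1)] gain_exponential[OF that(2)] lam[OF that(1)] lam[OF that(2)]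
        \<epsilon>0 \<open>\<rho>1 > 0\<close> \<open>\<rho>2 > 0\<close>]
    by (simp add: success_def B_def C_def kk_def)
  have "Pcop = 1 - prob {\<omega> \<in> space M. success (XN \<omega>) (XF \<omega>)}"
    unfolding Pcop_def success_def ..
  also have "\<dots> = 1 - ((1 - Pe1) * prob {\<omega> \<in> space M. success (gain hr hi d \<alpha> 1 \<omega>) (gain hr hi d \<alpha> 2 \<omega>)}
                       + Pe1 * prob {\<omega> \<in> space M. success (gain hr hi d \<alpha> 2 \<omega>) (gain hr hi d \<alpha> 1 \<omega>)})"
    unfolding XN_def XF_def Pe1_def prob_estimated_order_split[OF ind success_pred] ..
  also have "\<dots> = 1 - (1 - Pe1) * (lam 2 / (lam 2 + kk * lam 1)) * exp (- lam 1 * C - (lam 2 + kk * lam 1) * B)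
                  - Pe1 * (lam 1 / (lam 1 + kk * lam 2)) * exp (- lam 2 * C - (lam 1 + kk * lam 2) * B)"
    by (subst (1 2) success_prob) (auto simp: algebra_simps)
  finally show ?thesis .
qed

end
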